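(* Let $n\ge3$ and let $(X_1,\dots,X_n)$ be a stationary Markov chain on $\{0,1\}$ with transition probabilities $\Pr(X_{i+1}=1\mid X_i=0)=\frac{1}{n+1}$, $\Pr(X_{i+1}=1\mid X_i=1)=\frac{2}{n+1}$, and with each $X_i\sim\mathrm{Bernoulli}(1/n)$ (the stationary distribution). Let $S_n=\sum_{i=1}^nX_i$. Then $$D(P_{S_n}\,\|\,\mathrm{Po}(1))\le3\frac{\log n}{n}+\frac1n.$$
   Context: $\mathrm{Po}(1)$ is the Poisson distribution with mean 1; $D(P\|Q)=\sum_xP(x)\log\frac{P(x)}{Q(x)}$ is relative entropy with natural logarithm. *)

theory Defs
  imports "HOL-Probability.Probability"
begin

text \<open>Two-state stationary Markov chain on {0,1} of length n, indexed 0..n-1.\<close>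

definition init_prob :: "nat \<Rightarrow> nat \<Rightarrow> real" where
  "init_prob n a = (if a = 1 then 1 / real n else 1 - 1 / real n)"

definition trans_prob :: "nat \<Rightarrow> nat \<Rightarrow> nat \<Rightarrow> real" where
  "trans_prob n a b =
     (if a = 0 then (if b = 1 then 1 / (real n + 1) else 1 - 1 / (real n + 1))
      else (if b = 1 then 2 / (real n + 1) else 1 - 2 / (real n + 1)))"

definition chain_prob :: "nat \<Rightarrow> (nat \<Rightarrow> nat) \<Rightarrow> real" where
  "chain_prob n x = init_prob n (x 0) * (\<Prod>i<n - 1. trans_prob n (x i) (x (Suc i)))"

definition sum_law :: "nat \<Rightarrow> nat \<Rightarrow> real" where
  "sum_law n k = (\<Sum>x\<in>{x \<in> {..<n} \<rightarrow>\<^sub>E {0::nat, 1}. (\<Sum>i<n. x i) = k}. chain_prob n x)"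

definition rel_entropy :: "(nat \<Rightarrow> real) \<Rightarrow> (nat \<Rightarrow> real) \<Rightarrow> real" where
  "rel_entropy P Q = infsum (\<lambda>k. if P k = 0 then 0 else P k * ln (P k / Q k)) UNIV"

end

theory Submission
  imports Defs
begin

text \<open>
  Let c be the law of the path (X(1), ..., X(n)) and A(k) the set of binary words with k ones.
  By the log-sum inequality, P(S = k) ln P(S = k) is at most the sum of c ln c over A(k) plus
  P(S = k) ln |A(k)|, and |A(k)| k! \<le> n^k. Summing over k gives
  D(P_S || Po(1)) \<le> -H(X(1), ..., X(n)) + 1 + E[S] ln n = 1 + ln n - H(X(1), ..., X(n)),
  since E[S] = 1 by stationarity. By the Markov property and stationarity the joint entropy is
  H(X(1)) + (n - 1) H(X(2) | X(1)), which is explicit and is estimated with ln (1 - t) \<le> -t.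
\<close>

locale stationary_chain =
  fixes S :: "'a set" and p :: "'a \<Rightarrow> real" and q :: "'a \<Rightarrow> 'a \<Rightarrow> real"
  assumes init_sum: "(\<Sum>a\<in>S. p a) = 1"
    and trans_row_sum: "a \<in> S \<Longrightarrow> (\<Sum>b\<in>S. q a b) = 1"
    and stationary: "b \<in> S \<Longrightarrow> (\<Sum>a\<in>S. p a * q a b) = p b"
begin

definition paths :: "nat \<Rightarrow> (nat \<Rightarrow> 'a) set" where
  "paths m = {..<m} \<rightarrow>\<^sub>E S"

definition path_prob :: "nat \<Rightarrow> (nat \<Rightarrow> 'a) \<Rightarrow> real" where
  "path_prob m x = p (x 0) * (\<Prod>i<m - 1. q (x i) (x (Suc i)))"

lemma sum_paths_Suc:
  "(\<Sum>x\<in>paths (Suc m). F x) = (\<Sum>x\<in>paths m. \<Sum>b\<in>S. F (x(m := b)))"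
proof -
  have inj: "inj_on (\<lambda>(b, x). x(m := b)) (S \<times> paths m)"
    unfolding paths_def using inj_combinator[of m "{..<m}" "\<lambda>_. S"] by simp
  have img: "paths (Suc m) = (\<lambda>(b, x). x(m := b)) ` (S \<times> paths m)"
    unfolding paths_def lessThan_Suc by (simp add: PiE_insert_eq)
  have "(\<Sum>x\<in>paths (Suc m). F x) = (\<Sum>(b, x)\<in>S \<times> paths m. F (x(m := b)))"
    unfolding img sum.reindex[OF inj] by (simp add: comp_def case_prod_unfold)
  also have "\<dots> = (\<Sum>x\<in>paths m. \<Sum>b\<in>S. F (x(m := b)))"
    by (subst sum.swap) (simp add: sum.cartesian_product case_prod_unfold)
  finally show ?thesis .
qed

lemma sum_paths_1: "(\<Sum>x\<in>paths (Suc 0). F x) = (\<Sum>a\<in>S. F (\<lambda>i. if i = 0 then a else undefined))"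
  unfolding sum_paths_Suc by (simp add: paths_def fun_upd_def)

lemma path_prob_extend:
  "path_prob (Suc (Suc m)) (x(Suc m := b)) = path_prob (Suc m) x * q (x m) b"
proof -
  have "(\<Prod>i<m. q ((x(Suc m := b)) i) ((x(Suc m := b)) (Suc i))) = (\<Prod>i<m. q (x i) (x (Suc i)))"
    by (intro prod.cong) auto
  then show ?thesis
    unfolding path_prob_def by (simp add: mult.assoc)
qed

lemma stationary_sum:
  "(\<Sum>a\<in>S. p a * (\<Sum>b\<in>S. q a b * h b)) = (\<Sum>b\<in>S. p b * h b)"
proof -
  have "(\<Sum>a\<in>S. p a * (\<Sum>b\<in>S. q a b * h b)) = (\<Sum>b\<in>S. (\<Sum>a\<in>S. p a * q a b) * h b)"
    unfolding sum_distrib_left sum_distrib_right mult.assoc by (rule sum.swap)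
  then show ?thesis
    using stationary by simp
qed

lemma paths_last_in_states: "x \<in> paths (Suc m) \<Longrightarrow> x m \<in> S"
  unfolding paths_def by auto

lemma expectation_last_state:
  "(\<Sum>x\<in>paths (Suc m). path_prob (Suc m) x * h (x m)) = (\<Sum>a\<in>S. p a * h a)"
proof (induction m arbitrary: h)
  case 0
  show ?case by (simp add: sum_paths_1 path_prob_def)
next
  case (Suc m)
  have "(\<Sum>x\<in>paths (Suc (Suc m)). path_prob (Suc (Suc m)) x * h (x (Suc m)))
      = (\<Sum>x\<in>paths (Suc m). path_prob (Suc m) x * (\<Sum>b\<in>S. q (x m) b * h b))"
    by (simp add: sum_paths_Suc[of _ "Suc m"] path_prob_extend sum_distrib_left mult.assoc)
  also have "\<dots> = (\<Sum>a\<in>S. p a * (\<Sum>b\<in>S. q a b * h b))"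
    by (rule Suc.IH)
  finally show ?case
    by (simp only: stationary_sum)
qed

lemma sum_path_prob: "(\<Sum>x\<in>paths (Suc m). path_prob (Suc m) x) = 1"
  using expectation_last_state[of m "\<lambda>_. 1"] init_sum by simp

lemma expectation_sum_states:
  "(\<Sum>x\<in>paths (Suc m). path_prob (Suc m) x * (\<Sum>i<Suc m. f (x i)))
     = real (Suc m) * (\<Sum>a\<in>S. p a * f a)"
proof (induction m)
  case 0
  show ?case using expectation_last_state[of 0 f] by simp
next
  case (Suc m)
  let ?P = "path_prob (Suc m)" and ?F = "\<lambda>x. \<Sum>i<Suc m. f (x i)"
  have step: "(\<Sum>b\<in>S. c * q a b * (A + f b)) = c * A + c * (\<Sum>b\<in>S. q a b * f b)"
    if "a \<in> S" for a c A
  proof -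
    have "(\<Sum>b\<in>S. c * q a b * (A + f b)) = c * A * (\<Sum>b\<in>S. q a b) + c * (\<Sum>b\<in>S. q a b * f b)"
      by (simp add: distrib_left sum.distrib sum_distrib_left mult_ac)
    then show ?thesis
      using trans_row_sum[OF that] by simp
  qed
  have "(\<Sum>x\<in>paths (Suc (Suc m)). path_prob (Suc (Suc m)) x * (\<Sum>i<Suc (Suc m). f (x i)))
      = (\<Sum>x\<in>paths (Suc m). \<Sum>b\<in>S. ?P x * q (x m) b * (?F x + f b))"
    by (simp add: sum_paths_Suc[of _ "Suc m"] path_prob_extend)
  also have "\<dots> = (\<Sum>x\<in>paths (Suc m). ?P x * ?F x) + (\<Sum>x\<in>paths (Suc m). ?P x * (\<Sum>b\<in>S. q (x m) b * f b))"
    by (simp add: step paths_last_in_states sum.distrib)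
  also have "\<dots> = real (Suc (Suc m)) * (\<Sum>a\<in>S. p a * f a)"
    by (simp only: Suc.IH expectation_last_state[of m "\<lambda>a. \<Sum>b\<in>S. q a b * f b"] stationary_sum)
      (simp add: algebra_simps)
  finally show ?case .
qed

lemma path_prob_pos:
  assumes "\<And>a. a \<in> S \<Longrightarrow> p a > 0" and "\<And>a b. a \<in> S \<Longrightarrow> b \<in> S \<Longrightarrow> q a b > 0"
    and "x \<in> paths m" and "m > 0"
  shows "path_prob m x > 0"
proof -
  have x: "x i \<in> S" if "i < m" for i
    using assms(3) that unfolding paths_def by auto
  have "(\<Prod>i<m - 1. q (x i) (x (Suc i))) > 0"
    using assms(2) x by (intro prod_pos) auto
  then show ?thesis
    unfolding path_prob_def using assms(1) x \<open>m > 0\<close> by simp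
qed

lemma path_entropy_chain_rule:
  assumes p_pos: "\<And>a. a \<in> S \<Longrightarrow> p a > 0" and q_pos: "\<And>a b. a \<in> S \<Longrightarrow> b \<in> S \<Longrightarrow> q a b > 0"
  shows "(\<Sum>x\<in>paths (Suc m). path_prob (Suc m) x * ln (path_prob (Suc m) x))
    = (\<Sum>a\<in>S. p a * ln (p a)) + real m * (\<Sum>a\<in>S. p a * (\<Sum>b\<in>S. q a b * ln (q a b)))"
proof (induction m)
  case 0
  show ?case by (simp add: sum_paths_1 path_prob_def)
next
  case (Suc m)
  let ?P = "path_prob (Suc m)" and ?H = "\<lambda>a. \<Sum>b\<in>S. q a b * ln (q a b)"
  have step: "(\<Sum>b\<in>S. ?P x * q (x m) b * ln (?P x * q (x m) b)) = ?P x * ln (?P x) + ?P x * ?H (x m)"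
    if "x \<in> paths (Suc m)" for x
  proof -
    have xm: "x m \<in> S"
      using paths_last_in_states[OF that] .
    have "(\<Sum>b\<in>S. ?P x * q (x m) b * ln (?P x * q (x m) b))
        = (\<Sum>b\<in>S. ?P x * q (x m) b * ln (?P x) + ?P x * (q (x m) b * ln (q (x m) b)))"
      using path_prob_pos[OF p_pos q_pos that] q_pos[OF xm]
      by (intro sum.cong) (auto simp: ln_mult algebra_simps)
    also have "\<dots> = ?P x * ln (?P x) * (\<Sum>b\<in>S. q (x m) b) + ?P x * ?H (x m)"
      by (simp add: sum.distrib sum_distrib_left sum_distrib_right mult_ac)
    finally show ?thesis
      using trans_row_sum[OF xm] by simp
  qed
  have "(\<Sum>x\<in>paths (Suc (Suc m)). path_prob (Suc (Suc m)) x * ln (path_prob (Suc (Suc m)) x))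
      = (\<Sum>x\<in>paths (Suc m). \<Sum>b\<in>S. ?P x * q (x m) b * ln (?P x * q (x m) b))"
    by (simp add: sum_paths_Suc[of _ "Suc m"] path_prob_extend)
  also have "\<dots> = (\<Sum>x\<in>paths (Suc m). ?P x * ln (?P x)) + (\<Sum>x\<in>paths (Suc m). ?P x * ?H (x m))"
    by (simp add: step sum.distrib)
  also have "\<dots> = (\<Sum>a\<in>S. p a * ln (p a)) + real (Suc m) * (\<Sum>a\<in>S. p a * ?H a)"
    by (simp only: Suc.IH expectation_last_state[of m ?H]) (simp add: algebra_simps)
  finally show ?case .
qed

end

lemma log_sum_inequality_card:
  fixes c :: "'a \<Rightarrow> real"
  assumes "finite A" and "A \<noteq> {}" and c_pos: "\<And>x. x \<in> A \<Longrightarrow> c x > 0"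
  shows "(\<Sum>x\<in>A. c x) * ln ((\<Sum>x\<in>A. c x) / card A) \<le> (\<Sum>x\<in>A. c x * ln (c x))"
proof -
  define P where "P = (\<Sum>x\<in>A. c x)"
  define N where "N = real (card A)"
  have N_pos: "N > 0" and P_pos: "P > 0"
    using assms unfolding N_def P_def by (auto intro: sum_pos simp: card_gt_0_iff)
  have "c x * ln (P / N) - c x * ln (c x) \<le> P / N - c x" if "x \<in> A" for x
  proof -
    have cx: "c x > 0"
      using c_pos[OF that] .
    have "ln (P / (N * c x)) \<le> P / (N * c x) - 1"
      using N_pos P_pos cx by (intro ln_le_minus_one) simp
    then have "c x * ln (P / (N * c x)) \<le> c x * (P / (N * c x) - 1)"
      using cx by (intro mult_left_mono) auto
    moreover have "ln (P / (N * c x)) = ln (P / N) - ln (c x)"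
      using N_pos P_pos cx by (simp add: ln_div ln_mult)
    moreover have "c x * (P / (N * c x) - 1) = P / N - c x"
      using cx by (simp add: field_simps)
    ultimately show ?thesis
      by (simp add: right_diff_distrib)
  qed
  then have "(\<Sum>x\<in>A. c x * ln (P / N) - c x * ln (c x)) \<le> (\<Sum>x\<in>A. P / N - c x)"
    by (rule sum_mono)
  also have "\<dots> = 0"
    using N_pos unfolding N_def P_def by (simp add: sum_subtractf)
  finally have "(\<Sum>x\<in>A. c x * ln (P / N)) \<le> (\<Sum>x\<in>A. c x * ln (c x))"
    by (simp add: sum_subtractf)
  then show ?thesis
    by (simp add: P_def N_def sum_distrib_right)
qed

definition ones_count_law :: "nat \<Rightarrow> ((nat \<Rightarrow> nat) \<Rightarrow> real) \<Rightarrow> nat \<Rightarrow> real" where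
  "ones_count_law n c k = (\<Sum>x\<in>{x \<in> {..<n} \<rightarrow>\<^sub>E {0::nat, 1}. (\<Sum>i<n. x i) = k}. c x)"

lemma card_binary_words_with_ones:
  "card {x \<in> {..<n} \<rightarrow>\<^sub>E {0::nat, 1}. (\<Sum>i<n. x i) = k} \<le> n choose k"
proof -
  let ?W = "{x \<in> {..<n} \<rightarrow>\<^sub>E {0::nat, 1}. (\<Sum>i<n. x i) = k}"
  let ?ones = "\<lambda>x. {i \<in> {..<n}. x i = (1::nat)}"
  have card_ones: "card (?ones x) = (\<Sum>i<n. x i)" if "x \<in> {..<n} \<rightarrow>\<^sub>E {0, 1}" for x
  proof -
    have "card (?ones x) = (\<Sum>i<n. if x i = 1 then 1 else 0)"
      by (simp add: sum.If_cases lessThan_def Collect_conj_eq)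
    also have "\<dots> = (\<Sum>i<n. x i)"
      using that by (intro sum.cong) auto
    finally show ?thesis .
  qed
  have "inj_on ?ones ?W"
  proof (rule inj_onI)
    fix x y
    assume x: "x \<in> ?W" and y: "y \<in> ?W" and eq: "?ones x = ?ones y"
    have xW: "x \<in> {..<n} \<rightarrow>\<^sub>E {0, 1}" and yW: "y \<in> {..<n} \<rightarrow>\<^sub>E {0, 1}"
      using x y by simp_all
    show "x = y"
    proof (rule PiE_ext[OF xW yW])
      fix i
      assume i: "i \<in> {..<n}"
      then have "x i = 1 \<longleftrightarrow> y i = 1"
        using eq by blast
      moreover have "x i \<in> {0, 1}" and "y i \<in> {0, 1}"
        using PiE_mem[OF xW i] PiE_mem[OF yW i] .
      ultimately show "x i = y i"
        by auto
    qed
  qed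
  moreover have "?ones ` ?W \<subseteq> {B. B \<subseteq> {..<n} \<and> card B = k}"
  proof (rule image_subsetI)
    fix x
    assume "x \<in> ?W"
    then show "?ones x \<in> {B. B \<subseteq> {..<n} \<and> card B = k}"
      using card_ones[of x] by auto
  qed
  ultimately have "card ?W \<le> card {B. B \<subseteq> {..<n} \<and> card B = k}"
    by (intro card_inj_on_le) auto
  then show ?thesis
    by (simp add: n_subsets)
qed

lemma poisson_divergence_term_le:
  fixes c :: "'a \<Rightarrow> real" and r :: real
  assumes "finite A" and "A \<noteq> {}" and c_pos: "\<And>x. x \<in> A \<Longrightarrow> c x > 0"
    and r_pos: "r > 0" and card_le: "real (card A) * fact k \<le> r ^ k"
  shows "(\<Sum>x\<in>A. c x) * ln ((\<Sum>x\<in>A. c x) / pmf (poisson_pmf 1) k)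
    \<le> (\<Sum>x\<in>A. c x * (ln (c x) + 1 + real k * ln r))"
proof -
  define P where "P = (\<Sum>x\<in>A. c x)"
  define N where "N = real (card A)"
  have N_pos: "N > 0" and P_pos: "P > 0"
    using assms unfolding N_def P_def by (auto intro: sum_pos simp: card_gt_0_iff)
  have "ln (N * fact k) \<le> ln (r ^ k)"
    using card_le N_pos r_pos unfolding N_def by simp
  then have "ln N + ln (fact k) \<le> real k * ln r"
    using N_pos r_pos by (simp add: ln_mult ln_realpow)
  then have "P * (ln N + ln (fact k)) \<le> P * (real k * ln r)"
    using P_pos by (intro mult_left_mono) auto
  moreover have "P * ln (P / pmf (poisson_pmf 1) k) = P * ln (P / N) + P * (1 + (ln N + ln (fact k)))"
    using P_pos N_pos by (simp add: pmf_poisson ln_div ln_mult algebra_simps)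
  ultimately have "P * ln (P / pmf (poisson_pmf 1) k) \<le> P * ln (P / N) + P * (1 + real k * ln r)"
    by (simp add: distrib_left)
  also have "P * ln (P / N) \<le> (\<Sum>x\<in>A. c x * ln (c x))"
    unfolding P_def N_def using log_sum_inequality_card[OF assms(1-3)] .
  finally show ?thesis
    by (simp add: P_def algebra_simps sum.distrib sum_distrib_left sum_distrib_right)
qed

lemma rel_entropy_ones_count_law_poisson_le:
  fixes c :: "(nat \<Rightarrow> nat) \<Rightarrow> real"
  assumes n_pos: "n > 0" and c_pos: "\<And>x. x \<in> {..<n} \<rightarrow>\<^sub>E {0::nat, 1} \<Longrightarrow> c x > 0"
  shows "rel_entropy (ones_count_law n c) (pmf (poisson_pmf 1))
    \<le> (\<Sum>x\<in>{..<n} \<rightarrow>\<^sub>E {0::nat, 1}. c x * ln (c x)) + (\<Sum>x\<in>{..<n} \<rightarrow>\<^sub>E {0::nat, 1}. c x)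
      + ln (real n) * (\<Sum>x\<in>{..<n} \<rightarrow>\<^sub>E {0::nat, 1}. c x * (\<Sum>i<n. real (x i)))"
proof -
  let ?W = "{..<n} \<rightarrow>\<^sub>E {0::nat, 1}"
  let ?A = "\<lambda>k. {x \<in> ?W. (\<Sum>i<n. x i) = k}"
  let ?P = "ones_count_law n c"
  define f where "f k = (if ?P k = 0 then 0 else ?P k * ln (?P k / pmf (poisson_pmf 1) k))" for k
  define g where "g x = c x * (ln (c x) + 1 + real (\<Sum>i<n. x i) * ln (real n))" for x
  have ones_le: "(\<Sum>i<n. x i) \<le> n" if x: "x \<in> ?W" for x
  proof -
    have "x i \<le> 1" if "i \<in> {..<n}" for i
      using PiE_mem[OF x that] by auto
    then have "(\<Sum>i<n. x i) \<le> (\<Sum>i<n. 1)"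
      by (rule sum_mono)
    then show ?thesis
      by simp
  qed
  have f_le: "f k \<le> (\<Sum>x\<in>?A k. g x)" for k
  proof (cases "?A k = {}")
    case True
    then show ?thesis
      unfolding f_def ones_count_law_def True by simp
  next
    case False
    have "real (card (?A k)) * fact k \<le> real ((n choose k) * fact k)"
      using card_binary_words_with_ones[of n k] by (simp add: mult_right_mono)
    also have "\<dots> \<le> real n ^ k"
      by (metis binomial_fact_pow of_nat_le_iff of_nat_power)
    finally have card_le: "real (card (?A k)) * fact k \<le> real n ^ k" .
    have fin: "finite (?A k)"
      by (simp add: finite_PiE)
    have "?P k * ln (?P k / pmf (poisson_pmf 1) k)
        \<le> (\<Sum>x\<in>?A k. c x * (ln (c x) + 1 + real k * ln (real n)))"
      unfolding ones_count_law_def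
      by (rule poisson_divergence_term_le[OF fin False _ _ card_le]) (use c_pos n_pos in auto)
    moreover have "?P k > 0"
      unfolding ones_count_law_def by (rule sum_pos[OF fin False]) (use c_pos in auto)
    ultimately have "f k \<le> (\<Sum>x\<in>?A k. c x * (ln (c x) + 1 + real k * ln (real n)))"
      unfolding f_def by simp
    also have "\<dots> = (\<Sum>x\<in>?A k. g x)"
      unfolding g_def by (intro sum.cong) auto
    finally show ?thesis .
  qed
  have P_vanish: "?P k = 0" if "k \<notin> {..n}" for k
  proof -
    have "?A k = {}"
      using ones_le that by fastforce
    then show ?thesis
      unfolding ones_count_law_def by (simp only: sum.empty)
  qed
  have "rel_entropy ?P (pmf (poisson_pmf 1)) = infsum f {..n}"
    unfolding rel_entropy_def f_def
    by (rule infsum_cong_neutral) (simp_all add: P_vanish)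
  also have "\<dots> \<le> (\<Sum>k\<le>n. \<Sum>x\<in>?A k. g x)"
    using f_le by (simp add: sum_mono)
  also have "\<dots> = (\<Sum>x\<in>?W. g x)"
    using ones_le by (intro sum.group) (auto simp: finite_PiE)
  also have "\<dots> = (\<Sum>x\<in>?W. c x * ln (c x)) + (\<Sum>x\<in>?W. c x)
      + ln (real n) * (\<Sum>x\<in>?W. c x * (\<Sum>i<n. real (x i)))"
  proof -
    have "g x = c x * ln (c x) + c x + ln (real n) * (c x * (\<Sum>i<n. real (x i)))" for x
      unfolding g_def by (simp add: algebra_simps)
    then show ?thesis
      by (simp add: sum.distrib sum_distrib_left)
  qed
  finally show ?thesis .
qed

text \<open>
  Read K, L, M, l as ln (N - 1), ln N, ln (N + 1), ln 2: the left-hand side is then 1 + ln N minus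
  the entropy of the chain, and the hypotheses on K and M are instances of ln (1 - t) \<le> -t.
\<close>

lemma chain_entropy_estimate_arith:
  fixes N L K M l :: real
  assumes N: "N \<ge> 3" and K: "K \<le> L - 1 / N" and M: "L + 1 / (N + 1) \<le> M"
    and l: "l \<le> L" and L: "0 \<le> L"
  shows "(1 - 1/N) * (K - L) + (1/N) * (- L)
      + (N - 1) * ((1 - 1/N) * ((1 - 1/(N+1)) * (L - M) + (1/(N+1)) * (- M))
                   + (1/N) * ((1 - 2/(N+1)) * (K - M) + (2/(N+1)) * (l - M)))
      + 1 + L \<le> 3 * L / N + 1 / N"
    (is "?lhs \<le> ?rhs")
proof -
  have N_pos: "N > 0" "N + 1 > 0"
    using N by auto
  have "N * (N + 1) * (?lhs - ?rhs) = 2*(N - 1) * (N * (K - L) + 1) - N*(N - 1) * ((N + 1) * (M - L) - 1)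
      + 2*(N - 1) * (l - L) - ((N + 5) * L + (N - 1))"
    using N_pos by (simp add: divide_simps) (simp add: algebra_simps)
  also have "\<dots> \<le> 0"
  proof -
    have "N * (K - L) + 1 \<le> 0"
      using K N_pos by (simp add: field_simps)
    then have "2*(N - 1) * (N * (K - L) + 1) \<le> 0"
      using N by (intro mult_nonneg_nonpos) auto
    moreover have "(N + 1) * (M - L) - 1 \<ge> 0"
      using M N_pos by (simp add: field_simps)
    then have "N*(N - 1) * ((N + 1) * (M - L) - 1) \<ge> 0"
      using N by (intro mult_nonneg_nonneg) auto
    moreover have "2*(N - 1) * (l - L) \<le> 0"
      using N l by (intro mult_nonneg_nonpos) auto
    moreover have "(N + 5) * L + (N - 1) \<ge> 0"
      using N L by simp
    ultimately show ?thesis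
      by linarith
  qed
  finally show ?thesis
    using N_pos by (simp add: mult_le_0_iff)
qed

lemma init_prob_pos: "n \<ge> 2 \<Longrightarrow> init_prob n a > 0"
  by (auto simp: init_prob_def field_simps)

lemma trans_prob_pos: "n \<ge> 2 \<Longrightarrow> trans_prob n a b > 0"
  by (auto simp: trans_prob_def field_simps)

lemma stationary_chain_init_trans:
  assumes "n > 0"
  shows "stationary_chain {0::nat, 1} (init_prob n) (trans_prob n)"
proof
  fix b :: nat
  assume "b \<in> {0, 1}"
  moreover have N: "real n > 0" "real n + 1 > 0"
    using assms by simp_all
  then have "(1 - 1 / real n) * (1 - 1 / (real n + 1)) + 1 / real n * (1 - 2 / (real n + 1)) = 1 - 1 / real n"
    and "(1 - 1 / real n) * (1 / (real n + 1)) + 1 / real n * (2 / (real n + 1)) = 1 / real n"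
    by (simp_all add: divide_simps) (simp_all add: algebra_simps)
  ultimately show "(\<Sum>a\<in>{0, 1}. init_prob n a * trans_prob n a b) = init_prob n b"
    by (auto simp: init_prob_def trans_prob_def mult.commute)
qed (auto simp: init_prob_def trans_prob_def)

lemma chain_entropy_bound:
  assumes "n \<ge> 3"
  shows "(\<Sum>a\<in>{0::nat, 1}. init_prob n a * ln (init_prob n a))
      + real (n - 1) * (\<Sum>a\<in>{0::nat, 1}. init_prob n a * (\<Sum>b\<in>{0::nat, 1}. trans_prob n a b * ln (trans_prob n a b)))
      + 1 + ln (real n)
    \<le> 3 * ln (real n) / real n + 1 / real n"
proof -
  define N where "N = real n"
  have N: "N \<ge> 3"
    using assms unfolding N_def by simp
  have "1 - 1 / N = (N - 1) / N" and "1 - 1 / (N + 1) = N / (N + 1)"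
    and "1 - 2 / (N + 1) = (N - 1) / (N + 1)"
    using N by (simp_all add: field_simps)
  then have ln_1_minus: "ln (1 - 1 / N) = ln (N - 1) - ln N"
    and ln_1_minus': "ln (1 - 1 / (N + 1)) = ln N - ln (N + 1)"
    and ln_1_minus_2: "ln (1 - 2 / (N + 1)) = ln (N - 1) - ln (N + 1)"
    using N by (simp_all add: ln_div)
  have "ln (1 - 1 / N) \<le> - (1 / N)" and "ln (1 - 1 / (N + 1)) \<le> - (1 / (N + 1))"
    using N by (auto intro!: ln_one_minus_pos_upper_bound)
  then have "ln (N - 1) \<le> ln N - 1 / N" and "ln N + 1 / (N + 1) \<le> ln (N + 1)"
    unfolding ln_1_minus ln_1_minus' by simp_all
  moreover have "ln 2 \<le> ln N" and "0 \<le> ln N"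
    using N by simp_all
  ultimately have "(1 - 1/N) * (ln (N - 1) - ln N) + (1/N) * (- ln N)
      + (N - 1) * ((1 - 1/N) * ((1 - 1/(N+1)) * (ln N - ln (N + 1)) + (1/(N+1)) * (- ln (N + 1)))
                   + (1/N) * ((1 - 2/(N+1)) * (ln (N - 1) - ln (N + 1)) + (2/(N+1)) * (ln 2 - ln (N + 1))))
      + 1 + ln N \<le> 3 * ln N / N + 1 / N"
    by (intro chain_entropy_estimate_arith[OF N])
  moreover have "ln (1 / N) = - ln N" and "ln (1 / (N + 1)) = - ln (N + 1)"
    and "ln (2 / (N + 1)) = ln 2 - ln (N + 1)"
    using N by (simp_all add: ln_div)
  moreover have "real (n - 1) = N - 1"
    using assms unfolding N_def by simp
  ultimately show ?thesis
    unfolding init_prob_def trans_prob_def N_def[symmetric]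
    by (simp add: ln_1_minus ln_1_minus' ln_1_minus_2)
qed

theorem mainTheorem13:
  fixes n :: nat
  assumes "n \<ge> 3"
  shows "rel_entropy (sum_law n) (pmf (poisson_pmf 1))
           \<le> 3 * ln (real n) / real n + 1 / real n"
proof -
  interpret stationary_chain "{0::nat, 1}" "init_prob n" "trans_prob n"
    using assms by (intro stationary_chain_init_trans) simp
  let ?P = "path_prob n"
  have n_Suc: "n = Suc (n - 1)"
    using assms by simp
  have law: "sum_law n = ones_count_law n ?P"
    by (simp add: fun_eq_iff sum_law_def ones_count_law_def chain_prob_def path_prob_def)
  have P_pos: "?P x > 0" if "x \<in> paths n" for x
    using assms that by (intro path_prob_pos init_prob_pos trans_prob_pos) auto
  have "rel_entropy (sum_law n) (pmf (poisson_pmf 1))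
      \<le> (\<Sum>x\<in>paths n. ?P x * ln (?P x)) + (\<Sum>x\<in>paths n. ?P x)
        + ln (real n) * (\<Sum>x\<in>paths n. ?P x * (\<Sum>i<n. real (x i)))"
    unfolding law paths_def
    by (rule rel_entropy_ones_count_law_poisson_le) (use assms P_pos[unfolded paths_def] in auto)
  also have "\<dots> = (\<Sum>a\<in>{0::nat, 1}. init_prob n a * ln (init_prob n a))
      + real (n - 1) * (\<Sum>a\<in>{0::nat, 1}. init_prob n a * (\<Sum>b\<in>{0::nat, 1}. trans_prob n a b * ln (trans_prob n a b)))
      + 1 + ln (real n)"
    using assms path_entropy_chain_rule[of "n - 1"] sum_path_prob[of "n - 1"] expectation_sum_states[of "n - 1" real]
    by (simp add: init_prob_pos trans_prob_pos init_prob_def flip: n_Suc)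
  also have "\<dots> \<le> 3 * ln (real n) / real n + 1 / real n"
    using assms by (rule chain_entropy_bound)
  finally show ?thesis .
qed

end
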